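(* Consider the SRLOD model on a finite connected graph $G$ with $N\ge2$ agents, learning rate $\alpha\in(0,1)$, exploration rate $\epsilon\in(0,1)$, and Q-values in $[-1,1]$. Suppose that at some time $t_0\in\mathbb{N}$ there is an opinion $o\in\{-1,1\}$ with $q^i_o(t_0)>q^i_{-o}(t_0)$ for every agent $i\in\{1,\dots,N\}$. Then $$\mathbb{P}\big(q^i_o(t)>q^i_{-o}(t)\ \ \forall i\in\{1,\dots,N\},\ \forall t\ge t_0\big)=0,$$ i.e. consensus is almost surely eventually left.
   Context: The SRLOD (symmetric reinforcement learning for opinion dynamics) model: $G=(V,E)$ is a finite simple undirected graph with $V=\{1,\dots,N\}$. Each agent $i$ holds Q-values $q^i_1(t),q^i_{-1}(t)$, initialized in $[-1,1]$; agent $i$'s preferred opinion is the $o$ with $q^i_o(t)\ge q^i_{-o}(t)$ (opinion $1$ in case of a tie). In each discrete round $t$, an edge $(i,j)\in E$ is chosen uniformly at random; independently, each of $i$ and $j$ expresses an opinion $o_i(t),o_j(t)\in\{-1,1\}$, equal to its preferred opinion with probability $1-\epsilon$ and the other opinion with probability $\epsilon$; then both update only the Q-value of the opinion they expressed: $q^i_{o_i(t)}(t+1)=(1-\alpha)q^i_{o_i(t)}(t)+\alpha\,o_i(t)o_j(t)$ and $q^j_{o_j(t)}(t+1)=(1-\alpha)q^j_{o_j(t)}(t)+\alpha\,o_i(t)o_j(t)$. All other Q-values are unchanged. *)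

theory Defs
  imports "HOL-Probability.Probability"
begin

text \<open>Opinions are the integers -1 and 1.
A Q-state is a function q :: nat => int => real, where q i o is the Q-value of
agent i for opinion o.\<close>

definition simple_graph :: "nat \<Rightarrow> nat set set \<Rightarrow> bool" where
  "simple_graph N E \<longleftrightarrow> (\<forall>e\<in>E. e \<subseteq> {1..N} \<and> card e = 2)"

definition adj :: "nat set set \<Rightarrow> (nat \<times> nat) set" where
  "adj E = {(i, j). {i, j} \<in> E}"

definition connected_graph :: "nat \<Rightarrow> nat set set \<Rightarrow> bool" where
  "connected_graph N E \<longleftrightarrow> (\<forall>i\<in>{1..N}. \<forall>j\<in>{1..N}. (i, j) \<in> (adj E)\<^sup>*)"

text \<open>Preferred opinion: 1 in case of a tie.\<close>
definition pref :: "(nat \<Rightarrow> int \<Rightarrow> real) \<Rightarrow> nat \<Rightarrow> int" where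
  "pref q i = (if q i 1 \<ge> q i (-1) then 1 else -1)"

definition expressed :: "(nat \<Rightarrow> int \<Rightarrow> real) \<Rightarrow> nat \<Rightarrow> bool \<Rightarrow> int" where
  "expressed q i explore = (if explore then - pref q i else pref q i)"

text \<open>The randomness of one round: an edge chosen uniformly from E, and two independent
exploration coins (each True with probability eps) for the two endpoints
(the first coin belongs to the smaller endpoint, the second to the larger).\<close>
definition round_pmf :: "nat set set \<Rightarrow> real \<Rightarrow> (nat set \<times> bool \<times> bool) pmf" where
  "round_pmf E eps = pair_pmf (pmf_of_set E) (pair_pmf (bernoulli_pmf eps) (bernoulli_pmf eps))"

definition srlod_step :: "real \<Rightarrow> (nat \<Rightarrow> int \<Rightarrow> real) \<Rightarrow> nat set \<times> bool \<times> bool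
    \<Rightarrow> (nat \<Rightarrow> int \<Rightarrow> real)" where
  "srlod_step \<alpha> q r =
     (let e = fst r; i = Min e; j = Max e;
          oi = expressed q i (fst (snd r)); oj = expressed q j (snd (snd r));
          rew = real_of_int (oi * oj)
      in q(i := (q i)(oi := (1 - \<alpha>) * q i oi + \<alpha> * rew),
           j := (q j)(oj := (1 - \<alpha>) * q j oj + \<alpha> * rew)))"

primrec srlod_traj :: "real \<Rightarrow> (nat \<Rightarrow> int \<Rightarrow> real) \<Rightarrow> (nat set \<times> bool \<times> bool) stream
    \<Rightarrow> nat \<Rightarrow> (nat \<Rightarrow> int \<Rightarrow> real)" where
  "srlod_traj \<alpha> q0 \<omega> 0 = q0"
| "srlod_traj \<alpha> q0 \<omega> (Suc t) = srlod_step \<alpha> (srlod_traj \<alpha> q0 \<omega> t) (\<omega> !! t)"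

definition srlod_space :: "nat set set \<Rightarrow> real \<Rightarrow> (nat set \<times> bool \<times> bool) stream measure" where
  "srlod_space E eps = stream_space (measure_pmf (round_pmf E eps))"

end

theory Submission
  imports Defs
begin

text \<open>Fix an edge \<open>{i, j}\<close>
with \<open>i < j\<close>. If both endpoints explore once (both express \<open>-o\<close> and are rewarded) and then
\<open>i\<close> alone explores \<open>K\<close> times (so \<open>j\<close> expresses \<open>o\<close> and is punished each time), then
\<open>q\<^sub>j(-o) \<ge> 2\<alpha> - 1\<close> while \<open>q\<^sub>j(o) \<le> -1 + 2(1 - \<alpha>)\<^sup>K \<le> 2\<alpha> - 1\<close> once \<open>(1 - \<alpha>)\<^sup>K \<le> \<alpha>\<close>, so the
consensus breaks during this pattern. The pattern has a fixed positive probability \<open>p\<close> from every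
state with Q-values in \<open>[-1, 1]\<close>, and that set of states is invariant; hence consensus survives
\<open>n\<close> consecutive attempts with probability at most \<open>(1 - p)\<^sup>n\<close>, i.e. with probability zero.\<close>

text \<open>The inputs form an uncountable type (edges are sets of naturals) carrying the discrete
\<sigma>-algebra of a pmf; measurability of the state is obtained by factoring the dynamics through a
countable code of the inputs.\<close>

lemma measurable_foldl_stake:
  fixes code :: "'r \<Rightarrow> 'c::countable" and f :: "'s \<Rightarrow> 'r \<Rightarrow> 's" and R :: "'r pmf"
  assumes f_code: "\<And>s r r'. code r = code r' \<Longrightarrow> f s r = f s r'"
  shows "(\<lambda>\<omega>. foldl f s (stake t \<omega>)) \<in> stream_space (measure_pmf R) \<rightarrow>\<^sub>M count_space UNIV"
proof -
  have "f s (inv code (code r)) = f s r" for s r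
    by (rule f_code) (simp add: f_inv_into_f)
  then have "foldl f s (stake t \<omega>) = foldl (\<lambda>s c. f s (inv code c)) s (stake t (smap code \<omega>))" for \<omega>
    by (simp add: foldl_map)
  moreover have "(\<lambda>\<omega>. stake t (smap code \<omega>)) \<in> stream_space (measure_pmf R) \<rightarrow>\<^sub>M count_space UNIV"
    by (rule measurable_compose[OF measurable_smap measurable_stake]) simp
  ultimately show ?thesis
    by (simp add: measurable_compose[of _ _ "count_space UNIV"])
qed

definition persists_from :: "('s \<Rightarrow> 'r \<Rightarrow> 's) \<Rightarrow> 'r pmf \<Rightarrow> ('s \<Rightarrow> bool) \<Rightarrow> 's \<Rightarrow> nat \<Rightarrow> 'r stream set"
  where "persists_from f R P s m =
    {\<omega> \<in> space (stream_space (measure_pmf R)). \<forall>t\<ge>m. P (foldl f s (stake t \<omega>))}"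

lemma all_ge_nat_unfold:
  "(\<forall>t\<ge>m. Q t) \<longleftrightarrow> (m = 0 \<longrightarrow> Q 0) \<and> (\<forall>t\<ge>m - 1. Q (Suc t))"
proof (cases m)
  case 0
  have "(\<forall>t. Q t) \<longleftrightarrow> Q 0 \<and> (\<forall>t. Q (Suc t))"
    by (metis not0_implies_Suc)
  then show ?thesis using 0 by simp
next
  case (Suc k)
  have "(\<forall>t\<ge>Suc k. Q t) \<longleftrightarrow> (\<forall>t\<ge>k. Q (Suc t))"
    by (metis Suc_le_D Suc_le_mono)
  then show ?thesis using Suc by simp
qed

lemma prod_list_pmf_le_1: "prod_list (map (pmf R) rs) \<le> 1"
  by (induction rs) (auto intro!: mult_le_one pmf_le_1 prod_list_nonneg)

context
  fixes f :: "'s \<Rightarrow> 'r \<Rightarrow> 's" and R :: "'r pmf" and P :: "'s \<Rightarrow> bool"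
  assumes measurable_state:
    "\<And>s t. (\<lambda>\<omega>. foldl f s (stake t \<omega>)) \<in> stream_space (measure_pmf R) \<rightarrow>\<^sub>M count_space UNIV"
begin

lemma sets_persists_from: "persists_from f R P s m \<in> sets (stream_space (measure_pmf R))"
proof -
  have [measurable]: "Measurable.pred (stream_space (measure_pmf R)) (\<lambda>\<omega>. P (foldl f s (stake t \<omega>)))" for t
    using measurable_state by (rule measurable_compose) simp
  show ?thesis
    unfolding persists_from_def by measurable
qed

lemma emeasure_persists_from:
  "emeasure (stream_space (measure_pmf R)) (persists_from f R P s m) =
    (if m = 0 \<and> \<not> P s then 0
     else \<integral>\<^sup>+x. emeasure (stream_space (measure_pmf R)) (persists_from f R P (f s x) (m - 1)) \<partial>measure_pmf R)"
proof -
  have "{\<omega> \<in> space (stream_space (measure_pmf R)). x ## \<omega> \<in> persists_from f R P s m} =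
      (if m = 0 \<and> \<not> P s then {} else persists_from f R P (f s x) (m - 1))" for x
    unfolding persists_from_def
    by (subst all_ge_nat_unfold) (auto simp: space_stream_space)
  then show ?thesis
    by (subst prob_space.emeasure_stream_space[OF measure_pmf.prob_space_axioms])
      (simp_all add: sets_persists_from)
qed

lemma emeasure_persists_from_le_escape:
  assumes B_invariant: "\<And>s r. B s \<Longrightarrow> B (f s r)"
    and bound: "\<And>s. B s \<Longrightarrow> emeasure (stream_space (measure_pmf R)) (persists_from f R P s 0) \<le> ennreal c"
    and "0 \<le> c" and "B s" and "\<exists>k\<le>length rs. \<not> P (foldl f s (take k rs))"
  shows "emeasure (stream_space (measure_pmf R)) (persists_from f R P s 0)
    \<le> ennreal ((1 - prod_list (map (pmf R) rs)) * c)"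
  using assms(4,5)
proof (induction rs arbitrary: s)
  case Nil
  then show ?case by (subst emeasure_persists_from) simp
next
  case (Cons r rs)
  let ?G = "\<lambda>s. emeasure (stream_space (measure_pmf R)) (persists_from f R P s 0)"
  show ?case
  proof (cases "P s")
    case False
    then show ?thesis by (subst emeasure_persists_from) simp
  next
    case True
    with Cons.prems(2) have escape_rs: "\<exists>k\<le>length rs. \<not> P (foldl f (f s r) (take k rs))"
      by (metis Suc_le_mono foldl_Cons le0 length_Cons not0_implies_Suc take_0 take_Suc_Cons foldl_Nil)
    txt \<open>Either the next input is \<open>r\<close> and the induction hypothesis applies, or the uniform
      bound \<open>c\<close> does.\<close>
    define a where "a = (1 - prod_list (map (pmf R) rs)) * c"
    have "0 \<le> a"
      unfolding a_def using \<open>0 \<le> c\<close> prod_list_pmf_le_1[of R rs] by simp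
    have after_r: "?G (f s r) \<le> ennreal a"
      unfolding a_def by (rule Cons.IH) (use B_invariant Cons.prems(1) escape_rs in auto)
    have "?G s = (\<integral>\<^sup>+x. ?G (f s x) \<partial>measure_pmf R)"
      by (subst emeasure_persists_from) (simp add: True)
    also have "\<dots> \<le> (\<integral>\<^sup>+x. ennreal a * indicator {r} x + ennreal c * indicator (- {r}) x \<partial>measure_pmf R)"
      using after_r bound[OF B_invariant[OF Cons.prems(1)]]
      by (intro nn_integral_mono) (auto split: split_indicator)
    also have "\<dots> = ennreal a * ennreal (pmf R r) + ennreal c * ennreal (1 - pmf R r)"
      using measure_pmf.prob_compl[of "{r}" R]
      by (simp add: nn_integral_add nn_integral_cmult_indicator emeasure_pmf_single
          measure_pmf.emeasure_eq_measure measure_pmf_single Compl_eq_Diff_UNIV)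
    also have "\<dots> = ennreal (a * pmf R r + c * (1 - pmf R r))"
      using \<open>0 \<le> a\<close> \<open>0 \<le> c\<close> pmf_le_1[of R r] by (simp add: ennreal_mult ennreal_plus)
    also have "a * pmf R r + c * (1 - pmf R r) = (1 - prod_list (map (pmf R) (r # rs))) * c"
      unfolding a_def by (simp add: algebra_simps)
    finally show ?thesis .
  qed
qed

lemma emeasure_persists_from_eq_0:
  assumes B_invariant: "\<And>s r. B s \<Longrightarrow> B (f s r)"
    and escape: "\<And>s. B s \<Longrightarrow> \<exists>k\<le>length rs. \<not> P (foldl f s (take k rs))"
    and "0 < prod_list (map (pmf R) rs)" and "B s"
  shows "emeasure (stream_space (measure_pmf R)) (persists_from f R P s m) = 0"
proof -
  let ?S = "stream_space (measure_pmf R)"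
  interpret S: prob_space ?S
    by (rule prob_space.prob_space_stream_space[OF measure_pmf.prob_space_axioms])
  define p where "p = prod_list (map (pmf R) rs)"
  have p: "0 < p" "p \<le> 1"
    using \<open>0 < prod_list _\<close> prod_list_pmf_le_1[of R rs] unfolding p_def by auto
  have geometric: "emeasure ?S (persists_from f R P s 0) \<le> ennreal ((1 - p) ^ n)" if "B s" for s n
    using that
  proof (induction n arbitrary: s)
    case 0
    then show ?case using S.emeasure_le_1 by simp
  next
    case (Suc n)
    have "emeasure ?S (persists_from f R P s 0) \<le> ennreal ((1 - prod_list (map (pmf R) rs)) * (1 - p) ^ n)"
      by (rule emeasure_persists_from_le_escape[OF B_invariant Suc.IH _ Suc.prems escape[OF Suc.prems]])
        (use p in auto)
    then show ?case by (simp add: p_def)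
  qed
  have from_0: "emeasure ?S (persists_from f R P s 0) = 0" if "B s" for s
  proof -
    let ?m = "measure ?S (persists_from f R P s 0)"
    have "?m \<le> (1 - p) ^ n" for n
      using geometric[OF that, of n] p by (simp add: S.emeasure_eq_measure)
    moreover have "(\<lambda>n. (1 - p) ^ n) \<longlonglongrightarrow> 0"
      using p by (intro LIMSEQ_power_zero) auto
    ultimately have "?m \<le> 0"
      by (intro LIMSEQ_le_const) auto
    then show ?thesis
      by (simp add: S.emeasure_eq_measure antisym)
  qed
  show ?thesis
    using \<open>B s\<close>
  proof (induction m arbitrary: s)
    case 0
    then show ?case by (rule from_0)
  next
    case (Suc m)
    then show ?case by (subst emeasure_persists_from) (simp add: B_invariant)
  qed
qed

end

lemma srlod_traj_eq_foldl: "srlod_traj \<alpha> q \<omega> t = foldl (srlod_step \<alpha>) q (stake t \<omega>)"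
  by (induction t) (simp_all add: stake_Suc del: stake.simps(2))

lemma measurable_srlod_state:
  "(\<lambda>\<omega>. foldl (srlod_step \<alpha>) q (stake t \<omega>)) \<in> stream_space (measure_pmf R) \<rightarrow>\<^sub>M count_space UNIV"
proof (rule measurable_foldl_stake)
  fix s and r r' :: "nat set \<times> bool \<times> bool"
  assume "(Min (fst r), Max (fst r), snd r) = (Min (fst r'), Max (fst r'), snd r')"
  then show "srlod_step \<alpha> s r = srlod_step \<alpha> s r'"
    by (simp add: srlod_step_def Let_def)
qed

definition consensus :: "nat \<Rightarrow> int \<Rightarrow> (nat \<Rightarrow> int \<Rightarrow> real) \<Rightarrow> bool" where
  "consensus N opn q \<longleftrightarrow> (\<forall>i\<in>{1..N}. q i (- opn) < q i opn)"

definition qvalues_bounded :: "nat \<Rightarrow> (nat \<Rightarrow> int \<Rightarrow> real) \<Rightarrow> bool" where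
  "qvalues_bounded N q \<longleftrightarrow> (\<forall>i\<in>{1..N}. \<forall>p\<in>{-1, 1::int}. q i p \<in> {-1..1})"

lemma expressed_in_opinions: "expressed q i b \<in> {-1, 1}"
  unfolding expressed_def pref_def by auto

lemma pref_eq_if_consensus:
  assumes "consensus N opn q" and "i \<in> {1..N}" and "opn \<in> {-1, 1}"
  shows "pref q i = opn"
proof -
  have "q i (- opn) < q i opn"
    using assms(1,2) unfolding consensus_def by blast
  then show ?thesis
    using assms(3) unfolding pref_def by auto
qed

lemma qvalues_bounded_srlod_step:
  assumes "qvalues_bounded N q" and "0 < \<alpha>" and "\<alpha> < 1"
  shows "qvalues_bounded N (srlod_step \<alpha> q r)"
proof -
  have convex: "(1 - \<alpha>) * x + \<alpha> * real_of_int w \<in> {-1..1}"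
    if "x \<in> {-1..1}" and "w \<in> {-1, 1}" for x w
  proof -
    have "0 \<le> (1 - \<alpha>) * (x + 1)" and "0 \<le> (1 - \<alpha>) * (1 - x)"
      using that assms(2,3) by auto
    then show ?thesis using that assms(2,3) by (auto simp: algebra_simps)
  qed
  define i where "i = Min (fst r)"
  define j where "j = Max (fst r)"
  define oi where "oi = expressed q i (fst (snd r))"
  define oj where "oj = expressed q j (snd (snd r))"
  have opinions: "oi \<in> {-1, 1}" "oj \<in> {-1, 1}" "oi * oj \<in> {-1, 1}"
    unfolding oi_def oj_def
    using expressed_in_opinions[of q i "fst (snd r)"] expressed_in_opinions[of q j "snd (snd r)"]
    by auto
  have step: "srlod_step \<alpha> q r = q(i := (q i)(oi := (1 - \<alpha>) * q i oi + \<alpha> * real_of_int (oi * oj)),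
      j := (q j)(oj := (1 - \<alpha>) * q j oj + \<alpha> * real_of_int (oi * oj)))"
    unfolding srlod_step_def Let_def i_def j_def oi_def oj_def by simp
  show ?thesis
    using assms(1) opinions(1,2) convex[OF _ opinions(3)]
    unfolding qvalues_bounded_def step by auto
qed

lemma srlod_step_Max_under_consensus:
  assumes "consensus N opn q" and "opn \<in> {-1, 1}"
    and "Min e < Max e" and "Min e \<in> {1..N}" and "Max e \<in> {1..N}"
  shows "srlod_step \<alpha> q (e, True, True) (Max e) = (q (Max e))(- opn := (1 - \<alpha>) * q (Max e) (- opn) + \<alpha>)"
    and "srlod_step \<alpha> q (e, True, False) (Max e) = (q (Max e))(opn := (1 - \<alpha>) * q (Max e) opn - \<alpha>)"
  using pref_eq_if_consensus[OF assms(1) assms(4,2)] pref_eq_if_consensus[OF assms(1) assms(5,2)] assms(2,3)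
  unfolding srlod_step_def Let_def expressed_def by auto

lemma srlod_punished_rounds_Max:
  assumes consensus: "\<And>k. k < K \<Longrightarrow> consensus N opn (foldl (srlod_step \<alpha>) q (replicate k (e, True, False)))"
    and opn: "opn \<in> {-1, 1}" and e: "Min e < Max e" "Min e \<in> {1..N}" "Max e \<in> {1..N}"
  shows "foldl (srlod_step \<alpha>) q (replicate K (e, True, False)) (Max e) opn
      = -1 + (1 - \<alpha>) ^ K * (q (Max e) opn + 1)
    \<and> foldl (srlod_step \<alpha>) q (replicate K (e, True, False)) (Max e) (- opn) = q (Max e) (- opn)"
  using consensus
proof (induction K)
  case 0
  then show ?case by simp
next
  case (Suc K)
  let ?Q = "foldl (srlod_step \<alpha>) q (replicate K (e, True, False))"
  have "foldl (srlod_step \<alpha>) q (replicate (Suc K) (e, True, False)) = srlod_step \<alpha> ?Q (e, True, False)"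
    by (simp add: replicate_append_same[symmetric] del: replicate_append_same)
  then show ?case
    using srlod_step_Max_under_consensus(2)[OF Suc.prems[of K] opn e, of \<alpha>] Suc opn
    by (auto simp: algebra_simps)
qed

definition escape_rounds :: "nat set \<Rightarrow> nat \<Rightarrow> (nat set \<times> bool \<times> bool) list" where
  "escape_rounds e K = (e, True, True) # replicate K (e, True, False)"

lemma srlod_escape_rounds_break_consensus:
  assumes "0 < \<alpha>" and "\<alpha> < 1" and opn: "opn \<in> {-1, 1}"
    and e: "Min e < Max e" "Min e \<in> {1..N}" "Max e \<in> {1..N}"
    and "qvalues_bounded N q" and "(1 - \<alpha>) ^ K \<le> \<alpha>"
  shows "\<exists>k\<le>length (escape_rounds e K).
    \<not> consensus N opn (foldl (srlod_step \<alpha>) q (take k (escape_rounds e K)))"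
proof (rule ccontr)
  let ?j = "Max e"
  define q1 where "q1 = srlod_step \<alpha> q (e, True, True)"
  define Q where "Q k = foldl (srlod_step \<alpha>) q1 (replicate k (e, True, False))" for k
  assume "\<not> ?thesis"
  then have "consensus N opn (foldl (srlod_step \<alpha>) q (take k (escape_rounds e K)))" if "k \<le> Suc K" for k
    using that by (auto simp: escape_rounds_def)
  from this[of 0] this[of "Suc k" for k]
  have "consensus N opn q" and Q_consensus: "k \<le> K \<Longrightarrow> consensus N opn (Q k)" for k
    by (auto simp: escape_rounds_def Q_def q1_def take_replicate min_def)
  have "q1 ?j opn = q ?j opn" and "q1 ?j (- opn) = (1 - \<alpha>) * q ?j (- opn) + \<alpha>"
    using srlod_step_Max_under_consensus(1)[OF \<open>consensus N opn q\<close> opn e] opn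
    unfolding q1_def by auto
  then have "Q K ?j opn = -1 + (1 - \<alpha>) ^ K * (q ?j opn + 1)"
    and "Q K ?j (- opn) = (1 - \<alpha>) * q ?j (- opn) + \<alpha>"
    using srlod_punished_rounds_Max[of K N opn \<alpha> q1 e] Q_consensus opn e unfolding Q_def by auto
  moreover have "q ?j opn \<in> {-1..1}" and "q ?j (- opn) \<in> {-1..1}"
    using \<open>qvalues_bounded N q\<close> e(3) opn unfolding qvalues_bounded_def by auto
  then have "(1 - \<alpha>) ^ K * (q ?j opn + 1) \<le> \<alpha> * 2" and "0 \<le> (1 - \<alpha>) * (q ?j (- opn) + 1)"
    using \<open>(1 - \<alpha>) ^ K \<le> \<alpha>\<close> assms(1,2) by (auto intro!: mult_mono)
  ultimately have "Q K ?j opn \<le> Q K ?j (- opn)"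
    by (simp add: algebra_simps)
  moreover have "Q K ?j (- opn) < Q K ?j opn"
    using Q_consensus[of K] e(3) unfolding consensus_def by blast
  ultimately show False
    by simp
qed

lemma connected_graph_obtain_edge:
  assumes "N \<ge> 2" and "simple_graph N E" and "connected_graph N E"
  obtains e where "e \<in> E" and "Min e < Max e" and "Min e \<in> {1..N}" and "Max e \<in> {1..N}"
proof -
  have "(1, 2) \<in> (adj E)\<^sup>*"
    using assms(1,3) unfolding connected_graph_def by auto
  then obtain j where "(1, j) \<in> adj E"
    by (cases rule: converse_rtranclE) auto
  then have "{1, j} \<in> E"
    unfolding adj_def by simp
  moreover from this have "card {1, j} = 2" and "{1, j} \<subseteq> {1..N}"
    using assms(2) unfolding simple_graph_def by auto
  ultimately show ?thesis
    by (intro that[of "{1, j}"]) (auto simp: card_2_iff doubleton_eq_iff)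
qed

lemma pmf_round_pmf_pos:
  assumes "finite E" and "e \<in> E" and "0 < \<epsilon>" and "\<epsilon> < 1"
  shows "0 < pmf (round_pmf E \<epsilon>) (e, b, b')"
proof -
  have "E \<noteq> {}"
    using assms(2) by blast
  then show ?thesis
    using assms by (cases b; cases b') (auto simp: round_pmf_def pmf_pair card_gt_0_iff)
qed

lemma emeasure_srlod_consensus_persists:
  assumes "N \<ge> 2" and "simple_graph N E" and "connected_graph N E"
    and "0 < \<alpha>" and "\<alpha> < 1" and "0 < \<epsilon>" and "\<epsilon> < 1"
    and "qvalues_bounded N q" and "opn \<in> {-1, 1}"
  shows "emeasure (srlod_space E \<epsilon>)
    (persists_from (srlod_step \<alpha>) (round_pmf E \<epsilon>) (consensus N opn) q m) = 0"
proof -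
  obtain e where e: "e \<in> E" "Min e < Max e" "Min e \<in> {1..N}" "Max e \<in> {1..N}"
    using connected_graph_obtain_edge assms(1-3) by blast
  have "finite E"
    by (rule finite_subset[of E "Pow {1..N}"]) (use assms(2) in \<open>auto simp: simple_graph_def\<close>)
  obtain K where "(1 - \<alpha>) ^ K < \<alpha>"
    using real_arch_pow_inv[of \<alpha> "1 - \<alpha>"] assms(4,5) by auto
  show ?thesis
    unfolding srlod_space_def
  proof (rule emeasure_persists_from_eq_0[where B = "qvalues_bounded N" and rs = "escape_rounds e K"])
    show "0 < prod_list (map (pmf (round_pmf E \<epsilon>)) (escape_rounds e K))"
      using pmf_round_pmf_pos[OF \<open>finite E\<close> e(1) assms(6,7)]
      by (simp add: escape_rounds_def prod_list_replicate)
  qed (use measurable_srlod_state qvalues_bounded_srlod_step srlod_escape_rounds_break_consensus assms e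
         \<open>(1 - \<alpha>) ^ K < \<alpha>\<close> in auto)
qed

theorem lemma3:
  fixes N :: nat and E :: "nat set set" and \<alpha> \<epsilon> :: real
    and q0 :: "nat \<Rightarrow> int \<Rightarrow> real" and t0 :: nat and opn :: int
  assumes "N \<ge> 2"
    and "simple_graph N E" and "connected_graph N E"
    and "0 < \<alpha>" and "\<alpha> < 1" and "0 < \<epsilon>" and "\<epsilon> < 1"
    and "\<forall>i\<in>{1..N}. \<forall>p\<in>{-1, 1::int}. q0 i p \<in> {-1..1}"
    and "opn \<in> {-1, 1}"
  shows "{\<omega> \<in> space (srlod_space E \<epsilon>).
            (\<forall>i\<in>{1..N}. srlod_traj \<alpha> q0 \<omega> t0 i opn > srlod_traj \<alpha> q0 \<omega> t0 i (- opn)) \<and>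
            (\<forall>t\<ge>t0. \<forall>i\<in>{1..N}. srlod_traj \<alpha> q0 \<omega> t i opn > srlod_traj \<alpha> q0 \<omega> t i (- opn))}
           \<in> sets (srlod_space E \<epsilon>)
      \<and> measure (srlod_space E \<epsilon>)
          {\<omega> \<in> space (srlod_space E \<epsilon>).
            (\<forall>i\<in>{1..N}. srlod_traj \<alpha> q0 \<omega> t0 i opn > srlod_traj \<alpha> q0 \<omega> t0 i (- opn)) \<and>
            (\<forall>t\<ge>t0. \<forall>i\<in>{1..N}. srlod_traj \<alpha> q0 \<omega> t i opn > srlod_traj \<alpha> q0 \<omega> t i (- opn))} = 0"
    (is "?X \<in> _ \<and> _")
proof -
  let ?persists = "persists_from (srlod_step \<alpha>) (round_pmf E \<epsilon>) (consensus N opn) q0 t0"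
  let ?consensus_at_t0 = "\<lambda>\<omega>. consensus N opn (foldl (srlod_step \<alpha>) q0 (stake t0 \<omega>))"
  have X_eq: "?X = {\<omega> \<in> space (srlod_space E \<epsilon>). ?consensus_at_t0 \<omega>} \<inter> ?persists"
    by (auto simp: srlod_traj_eq_foldl persists_from_def consensus_def srlod_space_def)
  have persists_sets: "?persists \<in> sets (srlod_space E \<epsilon>)"
    unfolding srlod_space_def by (rule sets_persists_from[OF measurable_srlod_state])
  have "Measurable.pred (srlod_space E \<epsilon>) ?consensus_at_t0"
    unfolding srlod_space_def by (rule measurable_compose[OF measurable_srlod_state]) simp
  then have X_sets: "?X \<in> sets (srlod_space E \<epsilon>)"
    unfolding X_eq pred_def by (intro sets.Int persists_sets)
  have "emeasure (srlod_space E \<epsilon>) ?X \<le> emeasure (srlod_space E \<epsilon>) ?persists"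
    unfolding X_eq by (rule emeasure_mono[OF Int_lower2 persists_sets])
  also have "\<dots> = 0"
    by (rule emeasure_srlod_consensus_persists) (use assms in \<open>auto simp: qvalues_bounded_def\<close>)
  finally show ?thesis
    using X_sets by (simp add: measure_def)
qed

end
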